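(* Let $P$ be a polyhedron, $F$ a poset, and $f\colon P\to F$ a surjective open polyhedral map. Whenever $x<y$ in $F$, we have $f^{-1}[x]\subseteq\partial f^{-1}[y]$.
   Context: A polyhedron is a finite union of convex hulls of finite subsets of some $\mathbb R^d$. $\mathrm{Sub}_o P$ denotes the set of open subpolyhedra of $P$ (sets $P\setminus R$ with $R\subseteq P$ a polyhedron). A map $f\colon P\to F$ to a poset is polyhedral if $f^{-1}[U]\in\mathrm{Sub}_o P$ for every upset $U$ of $F$, and open if $f[W]$ is an upset of $F$ for every $W\in\mathrm{Sub}_o P$. We write $f^{-1}[x]$ for $f^{-1}[\{x\}]$. For a set $X\subseteq\mathbb R^d$, its boundary is $\partial X=\mathrm{Cl}\,X\setminus\mathrm{Int}^{\mathrm{Aff}}X$, where $\mathrm{Int}^{\mathrm{Aff}}$ is the interior taken inside the affine hull $\mathrm{Aff}\,X$ of $X$. *)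

theory Defs
  imports "HOL-Analysis.Analysis"
begin

text \<open>A (compact) polyhedron: a finite union of convex hulls of finite subsets.
  (Named poly_set to avoid clashing with HOL-Analysis' polyhedron, which means
  a finite intersection of half-spaces.)\<close>
definition poly_set :: "'a::euclidean_space set \<Rightarrow> bool" where
  "poly_set P \<longleftrightarrow> (\<exists>S. finite S \<and> (\<forall>A\<in>S. finite A) \<and> P = \<Union> ((\<lambda>A. convex hull A) ` S))"

definition Sub_o :: "'a::euclidean_space set \<Rightarrow> 'a set set" where
  "Sub_o P = {P - R | R. R \<subseteq> P \<and> poly_set R}"

definition is_upset :: "'b::order set \<Rightarrow> bool" where
  "is_upset U \<longleftrightarrow> (\<forall>x y. x \<in> U \<longrightarrow> x \<le> y \<longrightarrow> y \<in> U)"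

definition polyhedral_map :: "'a::euclidean_space set \<Rightarrow> ('a \<Rightarrow> 'b::order) \<Rightarrow> bool" where
  "polyhedral_map P f \<longleftrightarrow> (\<forall>U. is_upset U \<longrightarrow> {p \<in> P. f p \<in> U} \<in> Sub_o P)"

definition open_map_poly :: "'a::euclidean_space set \<Rightarrow> ('a \<Rightarrow> 'b::order) \<Rightarrow> bool" where
  "open_map_poly P f \<longleftrightarrow> (\<forall>W \<in> Sub_o P. is_upset (f ` W))"

definition bdry :: "'a::euclidean_space set \<Rightarrow> 'a set" where
  "bdry X = closure X - rel_interior X"

end

theory Submission
  imports Defs
begin

text \<open>Open subpolyhedra form a neighbourhood basis of every point of a polyhedron \<open>P\<close>: cutting
  away from \<open>P\<close> its intersections with the half-spaces complementary to a small open box around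
  the point leaves an open subpolyhedron inside the box. An open map sends such a neighbourhood
  of a point of the fibre over \<open>x\<close> onto an upset containing \<open>x\<close>, hence containing \<open>y\<close>; so
  every neighbourhood meets the fibre over \<open>y\<close>. Being disjoint from that fibre, the point is
  not in its relative interior either.\<close>

lemma poly_set_iff_Union_polytopes:
  "poly_set P \<longleftrightarrow> (\<exists>S. finite S \<and> (\<forall>T\<in>S. polytope T) \<and> P = \<Union>S)"
proof
  assume "poly_set P"
  then obtain S where "finite S" "\<forall>A\<in>S. finite A" "P = \<Union> ((\<lambda>A. convex hull A) ` S)"
    unfolding poly_set_def by blast
  then show "\<exists>S. finite S \<and> (\<forall>T\<in>S. polytope T) \<and> P = \<Union>S"
    by (intro exI[of _ "(\<lambda>A. convex hull A) ` S"]) (auto simp: polytope_def)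
next
  assume "\<exists>S. finite S \<and> (\<forall>T\<in>S. polytope T) \<and> P = \<Union>S"
  then obtain S where S: "finite S" "\<forall>T\<in>S. polytope T" "P = \<Union>S" by blast
  then obtain v where v: "\<forall>T\<in>S. finite (v T) \<and> T = convex hull (v T)"
    unfolding polytope_def by metis
  then have "P = \<Union> ((\<lambda>A. convex hull A) ` v ` S)"
    using S(3) by (auto simp: image_image)
  then show "poly_set P"
    unfolding poly_set_def using S(1) v by blast
qed

lemma poly_set_Int_polyhedron:
  assumes "poly_set P" and "polyhedron H"
  shows "poly_set (P \<inter> H)"
proof -
  obtain S where S: "finite S" "\<forall>T\<in>S. polytope T" "P = \<Union>S"
    using assms(1) unfolding poly_set_iff_Union_polytopes by blast
  have "P \<inter> H = \<Union> ((\<lambda>T. T \<inter> H) ` S)" using S(3) by blast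
  moreover have "\<forall>T\<in>S. polytope (T \<inter> H)"
    using S(2) assms(2) by (simp add: polytope_Int_polyhedron)
  ultimately show ?thesis
    unfolding poly_set_iff_Union_polytopes using S(1)
    by (intro exI[of _ "(\<lambda>T. T \<inter> H) ` S"]) simp
qed

lemma poly_set_Union:
  assumes "finite F" and "\<forall>X\<in>F. poly_set X"
  shows "poly_set (\<Union>F)"
proof -
  have "\<forall>X\<in>F. \<exists>S. finite S \<and> (\<forall>T\<in>S. polytope T) \<and> X = \<Union>S"
    using assms(2) by (simp add: poly_set_iff_Union_polytopes)
  then obtain S where S: "\<forall>X\<in>F. finite (S X) \<and> (\<forall>T\<in>S X. polytope T) \<and> X = \<Union>(S X)"
    by (rule bchoice[THEN exE])
  have "\<Union>F = (\<Union>X\<in>F. X)"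
    by simp
  also have "\<dots> = (\<Union>X\<in>F. \<Union>(S X))"
    using S by (intro SUP_cong) auto
  also have "\<dots> = \<Union>(\<Union>(S ` F))"
    by blast
  finally show ?thesis
    unfolding poly_set_iff_Union_polytopes using assms(1) S
    by (intro exI[of _ "\<Union>(S ` F)"]) simp
qed

lemma Sub_o_nhds:
  fixes P :: "'a::euclidean_space set"
  assumes "poly_set P" and "open U" and "p \<in> P \<inter> U"
  obtains W where "W \<in> Sub_o P" "p \<in> W" "W \<subseteq> U"
proof -
  obtain a b :: 'a where box: "box a b \<subseteq> U" "p \<in> box a b"
    using open_contains_box[OF assms(2)] assms(3) by blast
  define H where "H = (\<lambda>i. {z. i \<bullet> z \<le> i \<bullet> a}) ` Basis \<union> (\<lambda>i. {z. i \<bullet> z \<ge> i \<bullet> b}) ` Basis"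
  have "finite H" and "\<forall>h\<in>H. polyhedron h"
    by (auto simp: H_def polyhedron_halfspace_le polyhedron_halfspace_ge)
  define R where "R = \<Union> ((\<lambda>h. P \<inter> h) ` H)"
  have "poly_set R"
    unfolding R_def using \<open>finite H\<close> \<open>\<forall>h\<in>H. polyhedron h\<close> assms(1)
    by (intro poly_set_Union) (auto intro: poly_set_Int_polyhedron)
  then have "P - R \<in> Sub_o P"
    unfolding Sub_o_def R_def by blast
  moreover have "- \<Union>H = box a b"
    by (force simp: H_def mem_box not_le inner_commute)
  then have "P - R = P \<inter> box a b"
    unfolding R_def by blast
  ultimately show thesis
    using box assms(3) by (intro that[of "P - R"]) auto
qed

lemma open_map_poly_in_closure_fibre:
  assumes "poly_set P" and "open_map_poly P f" and "p \<in> P" and "f p \<le> y"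
  shows "p \<in> closure {q \<in> P. f q = y}"
  unfolding closure_iff_nhds_not_empty
proof (intro allI impI)
  fix A U assume "U \<subseteq> A" "open U" "p \<in> U"
  then obtain W where W: "W \<in> Sub_o P" "p \<in> W" "W \<subseteq> U"
    using Sub_o_nhds[OF assms(1)] assms(3) by (metis IntI)
  then have "is_upset (f ` W)"
    using assms(2) unfolding open_map_poly_def by blast
  then have "y \<in> f ` W"
    using W(2) assms(4) unfolding is_upset_def by blast
  moreover have "W \<subseteq> P"
    using W(1) unfolding Sub_o_def by blast
  ultimately show "{q \<in> P. f q = y} \<inter> A \<noteq> {}"
    using W(3) \<open>U \<subseteq> A\<close> by blast
qed

theorem lemma6p1:
  fixes P :: "'a::euclidean_space set" and f :: "'a \<Rightarrow> 'b::order"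
  assumes "poly_set P"
    and "f ` P = UNIV"
    and "open_map_poly P f"
    and "polyhedral_map P f"
    and "x < y"
  shows "{p \<in> P. f p = x} \<subseteq> bdry {p \<in> P. f p = y}"
proof
  fix p assume p: "p \<in> {p \<in> P. f p = x}"
  then have "p \<in> closure {q \<in> P. f q = y}"
    using open_map_poly_in_closure_fibre[OF assms(1,3)] assms(5) by simp
  moreover have "p \<notin> rel_interior {q \<in> P. f q = y}"
    using p assms(5) rel_interior_subset by fastforce
  ultimately show "p \<in> bdry {q \<in> P. f q = y}"
    unfolding bdry_def by blast
qed

end
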